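(* Let $n$ be a positive even integer, $0\le a<b$ and $d>0$. If a set $A\subseteq\mathbb{R}^2$ is totally $n$-dissected at the interval $(a,b)$ with thickness $d$, and $a<\cot(\pi/n)$, then $A$ is not drawable.
   Context: For $X\subseteq\mathbb{R}^2$ let $N(X)=\{x: |x-y|<1 \text{ for some } y\in X\}$. Let $\mathcal{D}_1=\{N(A_1): A_1\subseteq\mathbb{R}^2\}$ and for $m\ge 2$ let $\mathcal{D}_m=\{D\cup N(A_m): D\in\mathcal{D}_{m-1}, A_m\subseteq\mathbb{R}^2\}$ if $m$ is odd and $\mathcal{D}_m=\{D\setminus N(A_m): D\in\mathcal{D}_{m-1}, A_m\subseteq\mathbb{R}^2\}$ if $m$ is even; a set is drawable if it lies in $\bigcup_m\mathcal{D}_m$. Let $\ell$ be a ray emanating from $P$, and let $P_1,P_2\in\ell$ be the points at distance $a$ and $b$ from $P$. Consider the two rectangles, one on each side of the line through $\ell$, having $P_1P_2$ as a side and other side length $d$. $A$ is dissected by $\ell$ at $(a,b)$ with thickness $d$ if the interior of one of these rectangles is contained in $A$ and the interior of the other is disjoint from $A$; the dissection is clockwise if the rectangle contained in $A$ lies on the clockwise side of $\ell$ (the side swept by rotating $\ell$ clockwise about $P$), and counterclockwise otherwise. $A$ is totally $n$-dissected at $(a,b)$ with thickness $d$ if there are rays $\ell_1,\dots,\ell_n$ emanating from a common point, in this cyclic order, dividing the plane into $n$ equal angles, such that $A$ is dissected by each $\ell_i$ at $(a,b)$ with thickness $d$ and cyclically adjacent rays have opposite orientations. *)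

theory Defs
  imports "HOL-Analysis.Analysis"
begin

text \<open>The plane R^2 is modelled by the complex numbers.\<close>

definition nbhd :: "complex set \<Rightarrow> complex set" where
  "nbhd X = {x. \<exists>y\<in>X. dist x y < 1}"

fun Dcls :: "nat \<Rightarrow> complex set set" where
  "Dcls 0 = {}"
| "Dcls (Suc 0) = {nbhd A1 | A1. True}"
| "Dcls (Suc (Suc k)) =
     (if odd (Suc (Suc k))
      then {D \<union> nbhd Am | D Am. D \<in> Dcls (Suc k)}
      else {D - nbhd Am | D Am. D \<in> Dcls (Suc k)})"

definition drawable :: "complex set \<Rightarrow> bool" where
  "drawable A \<longleftrightarrow> (\<exists>m\<ge>1. A \<in> Dcls m)"

text \<open>Open rectangle with side from P + a u to P + b u (u the unit direction of the ray),
  lying on the side of the ray given by the unit normal w (either i u or -i u).\<close>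
definition rect :: "complex \<Rightarrow> complex \<Rightarrow> complex \<Rightarrow> real \<Rightarrow> real \<Rightarrow> real \<Rightarrow> complex set" where
  "rect P u w a b d = {P + of_real s * u + of_real t * w | s t. a < s \<and> s < b \<and> 0 < t \<and> t < d}"

text \<open>Clockwise side of the ray from P in direction u: rotation by -90 degrees, i.e. -i u.\<close>
definition dissected_cw :: "complex set \<Rightarrow> complex \<Rightarrow> complex \<Rightarrow> real \<Rightarrow> real \<Rightarrow> real \<Rightarrow> bool" where
  "dissected_cw A P u a b d \<longleftrightarrow>
     rect P u (- \<i> * u) a b d \<subseteq> A \<and> rect P u (\<i> * u) a b d \<inter> A = {}"

definition dissected_ccw :: "complex set \<Rightarrow> complex \<Rightarrow> complex \<Rightarrow> real \<Rightarrow> real \<Rightarrow> real \<Rightarrow> bool" where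
  "dissected_ccw A P u a b d \<longleftrightarrow>
     rect P u (\<i> * u) a b d \<subseteq> A \<and> rect P u (- \<i> * u) a b d \<inter> A = {}"

text \<open>Totally n-dissected: rays from P in directions cis(theta + 2 pi k / n), k = 0..n-1
  (in counterclockwise cyclic order, equal angles); orientation ori k (True = clockwise)
  alternates between cyclically adjacent rays.\<close>
definition totally_dissected :: "complex set \<Rightarrow> nat \<Rightarrow> real \<Rightarrow> real \<Rightarrow> real \<Rightarrow> bool" where
  "totally_dissected A n a b d \<longleftrightarrow>
     (\<exists>P \<theta>. \<exists>ori :: nat \<Rightarrow> bool.
        (\<forall>k<n. if ori k
                then dissected_cw A P (cis (\<theta> + 2 * pi * real k / real n)) a b d
                else dissected_ccw A P (cis (\<theta> + 2 * pi * real k / real n)) a b d) \<and>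
        (\<forall>k<n. ori ((k + 1) mod n) \<noteq> ori k))"

end

theory Submission
  imports Defs
begin

text \<open>Membership in a drawable set is decided by the last of its neighbourhoods
  \<open>N(A\<^sub>1), \<dots>, N(A\<^sub>m)\<close> that contains the point: it is in the set iff that index is odd.
  Put a point \<open>x\<^sub>k\<close> at a distance \<open>s\<close> with \<open>a < s < min b (cot (\<pi>/n))\<close> from the centre on each
  ray. Each \<open>x\<^sub>k\<close> is a frontier point of \<open>A\<close>. Choose \<open>x\<^sub>k\<close> and \<open>j\<close> with \<open>x\<^sub>k\<close> in the closure
  of \<open>N(A\<^sub>j)\<close> and \<open>j\<close> as large as possible. Then an open unit disc inside \<open>N(A\<^sub>j)\<close> touches
  \<open>x\<^sub>k\<close>, and near \<open>x\<^sub>k\<close> the set \<open>A\<close> is constant on that disc. One rectangle along the ray lies in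
  \<open>A\<close> and the other lies outside it, so the disc must miss one of them. This forces the disc to be
  tangent to the ray at \<open>x\<^sub>k\<close>. Since \<open>s < cot (\<pi>/n)\<close>, the tangent disc contains the point on a
  neighbouring ray. That point is also a frontier point of \<open>A\<close>, so it must lie in the closure of
  some \<open>N(A\<^sub>i)\<close> with \<open>i > j\<close>, which contradicts the choice of \<open>j\<close>.\<close>

section \<open>Drawable sets\<close>

fun drawing :: "(nat \<Rightarrow> complex set) \<Rightarrow> nat \<Rightarrow> complex set" where
  "drawing As 0 = {}"
| "drawing As (Suc k) =
     (if odd (Suc k) then drawing As k \<union> nbhd (As (Suc k)) else drawing As k - nbhd (As (Suc k)))"

lemma drawing_fun_upd_beyond: "m < i \<Longrightarrow> drawing (As(i := B)) m = drawing As m"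
  by (induction m) auto

lemma Dcls_Suc_drawing: "A \<in> Dcls (Suc k) \<Longrightarrow> \<exists>As. A = drawing As (Suc k)"
proof (induction k arbitrary: A)
  case 0
  then obtain A1 where "A = nbhd A1" by auto
  then show ?case by (intro exI[of _ "\<lambda>_. A1"]) simp
next
  case (Suc k)
  then obtain D B where "D \<in> Dcls (Suc k)"
    and A: "A = (if odd (Suc (Suc k)) then D \<union> nbhd B else D - nbhd B)"
    by (auto split: if_splits)
  with Suc.IH obtain As where "D = drawing As (Suc k)" by blast
  with A have "A = drawing (As(Suc (Suc k) := B)) (Suc (Suc k))"
    by (simp add: drawing_fun_upd_beyond)
  then show ?case by blast
qed

lemma drawable_imp_drawing:
  assumes "drawable A"
  obtains As m where "A = drawing As m"
proof -
  from assms obtain m where "1 \<le> m" "A \<in> Dcls m"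
    unfolding drawable_def by blast
  then obtain k where "A \<in> Dcls (Suc k)"
    by (cases m) auto
  with Dcls_Suc_drawing that show thesis by blast
qed

lemma drawing_subset_nbhds: "drawing As m \<subseteq> (\<Union>i\<in>{1..m}. nbhd (As i))"
  by (induction m) (auto simp: atLeastAtMostSuc_conv)

lemma closure_drawing_subset: "closure (drawing As m) \<subseteq> (\<Union>i\<in>{1..m}. closure (nbhd (As i)))"
proof (rule closure_minimal)
  show "drawing As m \<subseteq> (\<Union>i\<in>{1..m}. closure (nbhd (As i)))"
    using drawing_subset_nbhds closure_subset by blast
qed (intro closed_UN; simp)

lemma mem_drawing_iff_odd_last_layer:
  assumes "1 \<le> j" "j \<le> m" "x \<in> nbhd (As j)" "\<And>i. j < i \<Longrightarrow> i \<le> m \<Longrightarrow> x \<notin> nbhd (As i)"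
  shows "x \<in> drawing As m \<longleftrightarrow> odd j"
  using assms
proof (induction m)
  case (Suc m)
  then show ?case by (cases "j = Suc m") auto
qed simp

lemma drawing_constant_on_last_layer:
  assumes "1 \<le> j" "j \<le> m" "W \<subseteq> nbhd (As j)" "\<And>i. i \<in> {j<..m} \<Longrightarrow> W \<inter> nbhd (As i) = {}"
  shows "W \<subseteq> drawing As m \<or> W \<inter> drawing As m = {}"
proof -
  have "x \<in> drawing As m \<longleftrightarrow> odd j" if "x \<in> W" for x
    using assms that by (intro mem_drawing_iff_odd_last_layer) auto
  then show ?thesis by blast
qed

lemma closure_nbhd_touching_disc:
  assumes "x \<in> closure (nbhd X)"
  obtains c where "ball c 1 \<subseteq> nbhd X" "dist x c \<le> 1"
proof -
  define S where "S = (\<Union>c\<in>closure X. \<Union>e\<in>cball (0::complex) 1. {c + e})"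
  have "nbhd X \<subseteq> S"
  proof
    fix z assume "z \<in> nbhd X"
    then obtain y where "y \<in> X" "dist z y < 1" unfolding nbhd_def by auto
    then have "y \<in> closure X" "z - y \<in> cball 0 1" "z = y + (z - y)"
      using closure_subset by (auto simp: dist_norm norm_minus_commute)
    then show "z \<in> S" unfolding S_def by blast
  qed
  moreover have "closed S" unfolding S_def by (intro closed_compact_sums) auto
  ultimately have "closure (nbhd X) \<subseteq> S" by (rule closure_minimal)
  with assms obtain c e where c: "c \<in> closure X" "norm e \<le> 1" "x = c + e" unfolding S_def by auto
  have "ball c 1 \<subseteq> nbhd X"
  proof
    fix z assume "z \<in> ball c 1"
    then have "0 < 1 - dist z c" by (simp add: dist_commute)
    with c(1) obtain y where "y \<in> X" "dist y c < 1 - dist z c" using closure_approachable by blast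
    then have "dist z y < 1" using dist_triangle[of z y c] by (simp add: dist_commute)
    with \<open>y \<in> X\<close> show "z \<in> nbhd X" unfolding nbhd_def by blast
  qed
  moreover have "dist x c \<le> 1" using c by (simp add: dist_norm)
  ultimately show thesis by (rule that)
qed

section \<open>Rectangles along a ray\<close>

definition dissected :: "complex set \<Rightarrow> complex \<Rightarrow> complex \<Rightarrow> real \<Rightarrow> real \<Rightarrow> real \<Rightarrow> bool" where
  "dissected A P u a b d \<longleftrightarrow>
     (\<exists>w \<in> {\<i> * u, - \<i> * u}. rect P u w a b d \<subseteq> A \<and> rect P u (- w) a b d \<inter> A = {})"

lemma dissected_if_cw_or_ccw:
  "dissected_cw A P u a b d \<or> dissected_ccw A P u a b d \<Longrightarrow> dissected A P u a b d"
  unfolding dissected_def dissected_cw_def dissected_ccw_def by auto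

lemma ray_point_in_closure_rect:
  assumes "a < s" "s < b" "0 < d"
  shows "P + of_real s * u \<in> closure (rect P u w a b d)"
proof (rule Lim_in_closed_set[OF closed_closure _ trivial_limit_at_right_real])
  show "((\<lambda>t. P + of_real s * u + of_real t * w) \<longlongrightarrow> P + of_real s * u) (at_right 0)"
    by (auto intro!: tendsto_eq_intros)
  have "\<forall>\<^sub>F t in at_right 0. 0 < t \<and> t < d"
    using eventually_at_right_less order_tendstoD(2)[OF tendsto_ident_at \<open>0 < d\<close>]
    by (rule eventually_conj)
  then show "\<forall>\<^sub>F t in at_right 0. P + of_real s * u + of_real t * w \<in> closure (rect P u w a b d)"
  proof (rule eventually_mono)
    fix t assume "0 < t \<and> t < d"
    with assms have "P + of_real s * u + of_real t * w \<in> rect P u w a b d"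
      unfolding rect_def by blast
    then show "P + of_real s * u + of_real t * w \<in> closure (rect P u w a b d)"
      using closure_subset by blast
  qed
qed

lemma dissected_ray_point_in_frontier:
  assumes "dissected A P u a b d" "a < s" "s < b" "0 < d"
  shows "P + of_real s * u \<in> frontier A"
proof -
  from assms(1) obtain w where "rect P u w a b d \<subseteq> A" "rect P u (- w) a b d \<subseteq> - A"
    unfolding dissected_def by blast
  then show ?thesis
    unfolding frontier_closures
    using ray_point_in_closure_rect[OF assms(2-4)] closure_mono by blast
qed

lemma dissected_constant_region_misses_rect:
  assumes "dissected A P u a b d" "W \<subseteq> A \<or> W \<inter> A = {}"
  obtains w where "w = \<i> * u \<or> w = - \<i> * u" "W \<inter> rect P u w a b d = {}"
proof -
  from assms(1) obtain w where w: "w = \<i> * u \<or> w = - \<i> * u"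
    and "rect P u w a b d \<subseteq> A" "rect P u (- w) a b d \<inter> A = {}"
    unfolding dissected_def by blast
  with assms(2) have "W \<inter> rect P u (- w) a b d = {} \<or> W \<inter> rect P u w a b d = {}"
    by blast
  moreover have "- w = \<i> * u \<or> - w = - \<i> * u" using w by auto
  ultimately show thesis using that w by blast
qed

section \<open>Unit discs tangent to a ray\<close>

lemma orthonormal_frame_coordinates:
  fixes u w z :: complex
  assumes "u \<noteq> 0" "w = \<i> * u \<or> w = - \<i> * u"
  obtains p q :: real where "z = of_real p * u + of_real q * w"
proof -
  have "z = (z / u) * u"
    using assms(1) by simp
  also have "z / u = of_real (Re (z / u)) + of_real (Im (z / u)) * \<i>"
    by (simp add: complex_eq_iff)
  finally have z: "z = of_real (Re (z / u)) * u + of_real (Im (z / u)) * (\<i> * u)"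
    by (simp add: algebra_simps)
  show thesis
    using assms(2)
  proof
    assume "w = \<i> * u" then show thesis using z that by blast
  next
    assume "w = - \<i> * u" then show thesis using z that[of _ "- Im (z / u)"] by simp
  qed
qed

lemma orthonormal_frame_norm_square:
  fixes u w :: complex
  assumes "norm u = 1" "w = \<i> * u \<or> w = - \<i> * u"
  shows "norm (of_real p * u + of_real q * w) ^ 2 = p^2 + q^2"
proof -
  have "of_real p * u + of_real q * w = (if w = \<i> * u then Complex p q else Complex p (- q)) * u"
    using assms(2) by (auto simp: complex_eq_iff)
  then show ?thesis
    using assms by (simp add: norm_mult cmod_power2)
qed

lemma shifted_centre_sum_squares_less_1:
  fixes p q e :: real
  assumes "p^2 + q^2 \<le> 1" "-1 < q" "0 < e" "e < 1"
  shows "((e - 1) * p)^2 + (e * (1 + q) - q)^2 < 1"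
proof -
  have "((e - 1) * p)^2 + (e * (1 + q) - q)^2 \<le> (1 - e)^2 * (1 - q^2) + (e * (1 + q) - q)^2"
    using assms(1) by (simp add: power_mult_distrib power2_commute[of e 1] mult_left_mono)
  also have "\<dots> = 1 - 2 * e * (1 + q) * (1 - e)"
    by (simp add: power2_eq_square algebra_simps)
  also have "\<dots> < 1"
    using assms(2-4) by simp
  finally show ?thesis .
qed

lemma disc_meets_rect_near_ray_point:
  fixes u w x :: complex
  assumes u: "norm u = 1" and w: "w = \<i> * u \<or> w = - \<i> * u"
    and s: "a < s" "s < b" and "0 < d" and x: "x = P + of_real s * u"
    and disc: "p^2 + q^2 \<le> 1" and q: "-1 < q" and U: "open U" "x \<in> U"
  shows "U \<inter> ball (x + of_real p * u + of_real q * w) 1 \<inter> rect P u w a b d \<noteq> {}"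
proof -
  define y where "y e = P + of_real (s + e * p) * u + of_real (e * (1 + q)) * w" for e
  have lim: "(y \<longlongrightarrow> x) (at_right 0)" "((\<lambda>e. e) \<longlongrightarrow> 0) (at_right 0)"
    "((\<lambda>e. s + e * p) \<longlongrightarrow> s) (at_right 0)" "((\<lambda>e. e * (1 + q)) \<longlongrightarrow> 0) (at_right 0)"
    unfolding y_def x by (auto intro!: tendsto_eq_intros)
  have "\<forall>\<^sub>F e in at_right 0. y e \<in> U \<and> 0 < e \<and> e < 1 \<and> a < s + e * p \<and> s + e * p < b \<and> e * (1 + q) < d"
    using topological_tendstoD[OF lim(1) U] eventually_at_right_less
      order_tendstoD(2)[OF lim(2) zero_less_one] order_tendstoD[OF lim(3)] order_tendstoD(2)[OF lim(4)]
      s \<open>0 < d\<close>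
    by (intro eventually_conj) auto
  then obtain e where e: "y e \<in> U" "0 < e" "e < 1" "a < s + e * p" "s + e * p < b" "e * (1 + q) < d"
    using eventually_happens'[OF trivial_limit_at_right_real] by blast
  have "y e \<in> rect P u w a b d"
    unfolding rect_def y_def using e q by (intro CollectI exI conjI) auto
  moreover have "norm (y e - (x + of_real p * u + of_real q * w)) ^ 2 < 1"
  proof -
    have "y e - (x + of_real p * u + of_real q * w) =
        of_real ((e - 1) * p) * u + of_real (e * (1 + q) - q) * w"
      unfolding y_def x by (simp add: algebra_simps)
    then have "norm (y e - (x + of_real p * u + of_real q * w)) ^ 2 =
        ((e - 1) * p)^2 + (e * (1 + q) - q)^2"
      by (simp only: orthonormal_frame_norm_square[OF u w])
    also have "\<dots> < 1"
      using shifted_centre_sum_squares_less_1[OF disc q \<open>0 < e\<close> \<open>e < 1\<close>] .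
    finally show ?thesis .
  qed
  then have "y e \<in> ball (x + of_real p * u + of_real q * w) 1"
    by (simp add: dist_norm norm_minus_commute abs_square_less_1)
  ultimately show ?thesis
    using e(1) by blast
qed

lemma disc_avoiding_rect_is_tangent:
  fixes u w c x :: complex
  assumes u: "norm u = 1" and w: "w = \<i> * u \<or> w = - \<i> * u"
    and s: "a < s" "s < b" and "0 < d" and x: "x = P + of_real s * u"
    and U: "open U" "x \<in> U" and "dist x c \<le> 1"
    and avoid: "U \<inter> ball c 1 \<inter> rect P u w a b d = {}"
  shows "c = x - w"
proof -
  have "u \<noteq> 0" using u by auto
  obtain p q where pq: "c - x = of_real p * u + of_real q * w"
    by (rule orthonormal_frame_coordinates[OF \<open>u \<noteq> 0\<close> w])
  then have c: "c = x + of_real p * u + of_real q * w"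
    by (simp add: algebra_simps)
  have "p^2 + q^2 = norm (c - x) ^ 2"
    unfolding pq orthonormal_frame_norm_square[OF u w] ..
  also have "\<dots> \<le> 1"
    using \<open>dist x c \<le> 1\<close> by (simp add: dist_norm norm_minus_commute power_le_one)
  finally have disc: "p^2 + q^2 \<le> 1" .
  then have "q^2 \<le> 1"
    using zero_le_power2[of p] by linarith
  then have "\<bar>q\<bar> \<le> 1"
    by (simp add: abs_square_le_1)
  moreover have "\<not> -1 < q"
  proof
    assume "-1 < q"
    from disc_meets_rect_near_ray_point[OF u w s \<open>0 < d\<close> x disc this U] show False
      using avoid unfolding c by simp
  qed
  ultimately have "q = -1" by simp
  with disc have "p = 0" by simp
  with \<open>q = -1\<close> c show ?thesis by simp
qed

lemma neighbour_ray_point_in_tangent_disc: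
  fixes u :: complex and \<tau> \<beta> s :: real
  assumes u: "norm u = 1" and \<tau>: "\<tau> = 1 \<or> \<tau> = -1" and \<beta>: "0 < \<beta>" "\<beta> < pi"
    and s: "0 < s" "s < cot \<beta>"
  shows "dist (P + of_real s * (u * cis (\<tau> * (2 * \<beta>)))) (P + of_real s * u + of_real \<tau> * \<i> * u) < 1"
proof -
  define z where "z = of_real s * cis (\<tau> * (2 * \<beta>)) - of_real s - of_real \<tau> * \<i>"
  have dist_z: "dist (P + of_real s * (u * cis (\<tau> * (2 * \<beta>)))) (P + of_real s * u + of_real \<tau> * \<i> * u) = norm z"
  proof -
    have "P + of_real s * (u * cis (\<tau> * (2 * \<beta>))) - (P + of_real s * u + of_real \<tau> * \<i> * u) = u * z"
      by (simp add: z_def algebra_simps)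
    then show ?thesis
      using u by (simp add: dist_norm norm_mult)
  qed
  have "0 < sin \<beta>"
    using \<beta> by (simp add: sin_gt_zero)
  with s have gap: "0 < cos \<beta> - s * sin \<beta>"
    by (simp add: cot_def field_simps)
  have "cis (\<tau> * (2 * \<beta>)) = Complex (1 - 2 * sin \<beta> ^ 2) (\<tau> * (2 * sin \<beta> * cos \<beta>))"
    using \<tau> by (auto simp: complex_eq_iff cos_double_sin sin_double)
  then have "Re z = - 2 * s * sin \<beta> ^ 2" "Im z = \<tau> * (2 * s * sin \<beta> * cos \<beta> - 1)"
    by (simp_all add: z_def algebra_simps)
  moreover have "\<tau>^2 = 1"
    using \<tau> by auto
  ultimately have "norm z ^ 2 = (2 * s * sin \<beta> ^ 2)^2 + (2 * s * sin \<beta> * cos \<beta> - 1)^2"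
    by (simp add: cmod_power2 power_mult_distrib)
  also have "\<dots> = 4 * s^2 * sin \<beta> ^ 2 * (sin \<beta> ^ 2 + cos \<beta> ^ 2) - 4 * s * sin \<beta> * cos \<beta> + 1"
    by algebra
  also have "\<dots> = 1 - 4 * s * sin \<beta> * (cos \<beta> - s * sin \<beta>)"
    by (simp add: power2_eq_square algebra_simps)
  also have "\<dots> < 1"
    using s(1) \<open>0 < sin \<beta>\<close> gap by simp
  finally show ?thesis
    unfolding dist_z by (simp add: abs_square_less_1)
qed

section \<open>Equiangular rays\<close>

definition equiangular_dir :: "real \<Rightarrow> nat \<Rightarrow> nat \<Rightarrow> complex" where
  "equiangular_dir \<theta> n k = cis (\<theta> + 2 * pi * real k / real n)"

lemma norm_equiangular_dir: "norm (equiangular_dir \<theta> n k) = 1"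
  by (simp add: equiangular_dir_def)

lemma equiangular_dir_mod_add:
  assumes "0 < n"
  shows "equiangular_dir \<theta> n ((k + l) mod n) = equiangular_dir \<theta> n k * cis (2 * pi * real l / real n)"
proof -
  have "real (k + l) = real ((k + l) div n) * real n + real ((k + l) mod n)"
    by (metis of_nat_add of_nat_mult div_mult_mod_eq)
  then have mod: "real ((k + l) mod n) = real k + real l - real n * real ((k + l) div n)"
    by simp
  have "\<theta> + 2 * pi * real ((k + l) mod n) / real n =
      (\<theta> + 2 * pi * real k / real n + 2 * pi * real l / real n) - 2 * pi * real ((k + l) div n)"
    using assms unfolding mod by (simp add: field_simps)
  moreover have "cis (x - 2 * pi * real m) = cis x" for x and m :: nat
    by (simp flip: cis_divide)
  ultimately have "equiangular_dir \<theta> n ((k + l) mod n) =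
      cis (\<theta> + 2 * pi * real k / real n + 2 * pi * real l / real n)"
    unfolding equiangular_dir_def by presburger
  then show ?thesis
    by (simp add: equiangular_dir_def cis_mult)
qed

lemma equiangular_neighbour_in_tangent_disc:
  assumes "2 \<le> n" "k < n" "\<tau> = 1 \<or> \<tau> = -1" "0 < s" "s < cot (pi / real n)"
  obtains k' where "k' < n" "P + of_real s * equiangular_dir \<theta> n k' \<in>
    ball (P + of_real s * equiangular_dir \<theta> n k + of_real \<tau> * \<i> * equiangular_dir \<theta> n k) 1"
proof -
  define l where "l = (if \<tau> = 1 then 1 else n - 1)"
  have "cis (2 * pi * real l / real n) = cis (\<tau> * (2 * (pi / real n)))"
  proof (cases "\<tau> = 1")
    case False
    with assms(1,3) have "2 * pi * real l / real n = \<tau> * (2 * (pi / real n)) + 2 * pi"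
      by (simp add: l_def of_nat_diff field_simps)
    then show ?thesis by (simp flip: cis_mult)
  qed (simp add: l_def)
  then have shift: "equiangular_dir \<theta> n ((k + l) mod n) =
      equiangular_dir \<theta> n k * cis (\<tau> * (2 * (pi / real n)))"
    using assms(1) by (simp add: equiangular_dir_mod_add)
  have \<beta>: "0 < pi / real n" "pi / real n < pi"
    using assms(1) by (auto simp: field_simps)
  have "(k + l) mod n < n"
    using assms(1) by simp
  moreover have "dist (P + of_real s * equiangular_dir \<theta> n ((k + l) mod n))
      (P + of_real s * equiangular_dir \<theta> n k + of_real \<tau> * \<i> * equiangular_dir \<theta> n k) < 1"
    unfolding shift unfolding equiangular_dir_def
    by (rule neighbour_ray_point_in_tangent_disc[OF norm_cis assms(3) \<beta> assms(4,5)])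
  ultimately show thesis
    using that by (simp add: dist_commute)
qed

section \<open>Layers at frontier points\<close>

lemma frontier_point_in_higher_layer:
  assumes j: "1 \<le> j" "j \<le> m" and disc: "ball c 1 \<subseteq> nbhd (As j)"
    and z: "z \<in> ball c 1" "z \<in> frontier (drawing As m)"
  shows "\<exists>i\<in>{j<..m}. z \<in> closure (nbhd (As i))"
proof (rule ccontr)
  assume "\<not> (\<exists>i\<in>{j<..m}. z \<in> closure (nbhd (As i)))"
  moreover define V where "V = ball c 1 - (\<Union>i\<in>{j<..m}. closure (nbhd (As i)))"
  ultimately have "open V" "z \<in> V"
    using z(1) by (auto intro!: open_Diff closed_UN)
  have "V \<inter> nbhd (As i) = {}" if "i \<in> {j<..m}" for i
    using that closure_subset[of "nbhd (As i)"] unfolding V_def by blast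
  then have "V \<subseteq> drawing As m \<or> V \<inter> drawing As m = {}"
    using disc by (intro drawing_constant_on_last_layer[OF j]) (auto simp: V_def)
  then have "z \<in> interior (drawing As m) \<or> z \<in> interior (- drawing As m)"
    using interior_maximal[OF _ \<open>open V\<close>] \<open>z \<in> V\<close> by blast
  with z(2) show False
    by (auto simp: frontier_interiors)
qed

lemma top_layer_disc_tangent:
  assumes "dissected (drawing As m) P u a b d" and u: "norm u = 1" and s: "a < s" "s < b" "0 < d"
    and x: "x = P + of_real s * u"
    and j: "1 \<le> j" "j \<le> m" "x \<in> closure (nbhd (As j))"
    and top: "\<And>i. i \<in> {j<..m} \<Longrightarrow> x \<notin> closure (nbhd (As i))"
  obtains \<tau> :: real where "\<tau> = 1 \<or> \<tau> = -1" "ball (x + of_real \<tau> * \<i> * u) 1 \<subseteq> nbhd (As j)"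
proof -
  obtain c where c: "ball c 1 \<subseteq> nbhd (As j)" "dist x c \<le> 1"
    using closure_nbhd_touching_disc[OF j(3)] .
  define U where "U = - (\<Union>i\<in>{j<..m}. closure (nbhd (As i)))"
  have U: "open U" "x \<in> U"
    unfolding U_def using top by auto
  have "U \<inter> ball c 1 \<inter> nbhd (As i) = {}" if "i \<in> {j<..m}" for i
    using that closure_subset[of "nbhd (As i)"] unfolding U_def by blast
  then have "U \<inter> ball c 1 \<subseteq> drawing As m \<or> U \<inter> ball c 1 \<inter> drawing As m = {}"
    using c(1) by (intro drawing_constant_on_last_layer[OF j(1,2)]) auto
  with assms(1) obtain w where w: "w = \<i> * u \<or> w = - \<i> * u" "U \<inter> ball c 1 \<inter> rect P u w a b d = {}"
    by (rule dissected_constant_region_misses_rect)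
  then have "c = x - w"
    using disc_avoiding_rect_is_tangent[OF u w(1) s x U c(2)] by blast
  show thesis
  proof (cases "w = \<i> * u")
    case True
    with \<open>c = x - w\<close> c(1) show thesis by (intro that[of "-1"]) auto
  next
    case False
    with w(1) \<open>c = x - w\<close> c(1) show thesis by (intro that[of 1]) auto
  qed
qed

lemma higher_layer_on_neighbour_ray:
  assumes n: "2 \<le> n" and s: "0 < s" "a < s" "s < b" "s < cot (pi / real n)" and "0 < d"
    and dissected: "\<And>k. k < n \<Longrightarrow> dissected (drawing As m) P (equiangular_dir \<theta> n k) a b d"
    and k: "k < n" and j: "1 \<le> j" "j \<le> m"
    and x: "x = (\<lambda>k. P + of_real s * equiangular_dir \<theta> n k)" "x k \<in> closure (nbhd (As j))"
    and top: "\<And>i. i \<in> {j<..m} \<Longrightarrow> x k \<notin> closure (nbhd (As i))"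
  obtains k' i where "k' < n" "i \<in> {j<..m}" "x k' \<in> closure (nbhd (As i))"
proof -
  have xk: "x k = P + of_real s * equiangular_dir \<theta> n k"
    using x(1) by simp
  obtain \<tau> :: real where \<tau>: "\<tau> = 1 \<or> \<tau> = -1"
    and disc: "ball (x k + of_real \<tau> * \<i> * equiangular_dir \<theta> n k) 1 \<subseteq> nbhd (As j)"
    by (rule top_layer_disc_tangent[OF dissected[OF k] norm_equiangular_dir s(2,3) \<open>0 < d\<close> xk j x(2) top])
  obtain k' where "k' < n" "x k' \<in> ball (x k + of_real \<tau> * \<i> * equiangular_dir \<theta> n k) 1"
    using equiangular_neighbour_in_tangent_disc[OF n k \<tau> s(1,4)] unfolding x .
  moreover have "x k' \<in> frontier (drawing As m)"
    unfolding x by (rule dissected_ray_point_in_frontier[OF dissected[OF \<open>k' < n\<close>] s(2,3) \<open>0 < d\<close>])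
  ultimately show thesis
    using frontier_point_in_higher_layer[of j m _ As, OF j disc] that by blast
qed

theorem not_drawable_if_dissected_by_equiangular_rays:
  assumes n: "2 \<le> n" and "0 \<le> a" "a < b" "0 < d" "a < cot (pi / real n)"
    and dissected: "\<And>k. k < n \<Longrightarrow> dissected A P (equiangular_dir \<theta> n k) a b d"
  shows "\<not> drawable A"
proof
  assume "drawable A"
  then obtain As m where A: "A = drawing As m"
    by (rule drawable_imp_drawing)
  obtain s where s: "a < s" "s < b" "s < cot (pi / real n)"
    using assms(3,5) by (metis dense min_less_iff_conj)
  define x where "x = (\<lambda>k. P + of_real s * equiangular_dir \<theta> n k)"
  define L where "L = {j \<in> {1..m}. \<exists>k<n. x k \<in> closure (nbhd (As j))}"
  have "finite L"
    unfolding L_def by simp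
  have "x 0 \<in> closure A"
    using dissected_ray_point_in_frontier[OF dissected s(1,2) \<open>0 < d\<close>] n
    unfolding x_def frontier_def by simp
  then have "L \<noteq> {}"
    using closure_drawing_subset n unfolding A L_def by fastforce
  then obtain k where k: "k < n" "1 \<le> Max L" "Max L \<le> m" "x k \<in> closure (nbhd (As (Max L)))"
    using Max_in[OF \<open>finite L\<close>] unfolding L_def by auto
  have top: "x k \<notin> closure (nbhd (As i))" if "i \<in> {Max L<..m}" for i
    using that k(1) Max_ge[OF \<open>finite L\<close>, of i] unfolding L_def by fastforce
  have "0 < s"
    using assms(2) s(1) by simp
  obtain k' i where "k' < n" "i \<in> {Max L<..m}" "x k' \<in> closure (nbhd (As i))"
    by (rule higher_layer_on_neighbour_ray[OF n \<open>0 < s\<close> s \<open>0 < d\<close> dissected[unfolded A] k(1-3) x_def k(4) top])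
  then show False
    using Max_ge[OF \<open>finite L\<close>, of i] unfolding L_def by fastforce
qed

theorem theorem4p6:
  fixes A :: "complex set" and n :: nat and a b d :: real
  assumes "n > 0" and "even n"
    and "0 \<le> a" and "a < b" and "d > 0"
    and "totally_dissected A n a b d"
    and "a < cot (pi / real n)"
  shows "\<not> drawable A"
proof -
  have "2 \<le> n"
    using assms(1,2) by presburger
  from assms(6) obtain P \<theta> and ori :: "nat \<Rightarrow> bool" where oriented:
    "\<forall>k<n. if ori k then dissected_cw A P (equiangular_dir \<theta> n k) a b d
      else dissected_ccw A P (equiangular_dir \<theta> n k) a b d"
    unfolding totally_dissected_def equiangular_dir_def by blast
  then have "dissected A P (equiangular_dir \<theta> n k) a b d" if "k < n" for k
    using oriented[rule_format, OF that] by (intro dissected_if_cw_or_ccw) (auto split: if_splits)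
  from not_drawable_if_dissected_by_equiangular_rays[OF \<open>2 \<le> n\<close> assms(3,4,5,7) this]
  show ?thesis .
qed

end
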